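(* Let $n$ be even, $m\ge1$, and $q>4$ an integer. Let $\vec A\in\mathbb Z_2^{m\times n}$ be uniform and $\boldsymbol\theta$ uniform in $\Theta_q^m$, and let $\rho_A$ denote the reduced density matrix of $\ket{\Phi^{\vec A}_{\boldsymbol\theta}}$ on the first $n/2$ qubits. Then $$\mathbb E_{\vec A,\boldsymbol\theta}\big[\mathrm{Tr}(\rho_A^2)\big]\le 2\cdot2^{-n/2}+\Big(\tfrac34\Big)^m,$$ and for every $\vec A$ and $\boldsymbol\theta$, $\mathrm{rank}(\rho_A)\le16^m$, so the entanglement entropy satisfies $S(\rho_A)\le m\log16$.
   Context: $\ket{\Phi^{\vec A}_{\boldsymbol\theta}}=\exp\!\big(\mathrm i\sum_{i=1}^m\theta_i\bigotimes_{j=1}^nZ^{\vec A_{ij}}\big)H^{\otimes n}\ket{0^n}$, $Z^0=I$, $Z^1=Z$; $\Theta_q=\{2\pi k/q:k=0,\dots,q-1\}$. $S(\rho)=-\mathrm{Tr}(\rho\log\rho)$ is the von Neumann entropy. Equivalently, writing $\Lambda$ for the $2^{n/2}\times2^{n/2}$ matrix with entries $\Lambda_{k,l}=\bra{k,l}D\ket{k,l}$ where $D$ is the diagonal unitary above, $\rho_A=2^{-n}\Lambda\Lambda^\dagger$. *)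

theory Defs
  imports "Jordan_Normal_Form.DL_Rank" "Jordan_Normal_Form.Char_Poly"
begin

definition Theta :: "nat \<Rightarrow> real set" where
  "Theta q = {2 * pi * real k / real q | k. k < q}"

(* A in Z_2^{m x n}: entries A i j for i < m, j < n; zero (False) outside *)
definition Amats :: "nat \<Rightarrow> nat \<Rightarrow> (nat \<Rightarrow> nat \<Rightarrow> bool) set" where
  "Amats m n = {A. \<forall>i j. \<not> (i < m \<and> j < n) \<longrightarrow> \<not> A i j}"

definition Thetas :: "nat \<Rightarrow> nat \<Rightarrow> (nat \<Rightarrow> real) set" where
  "Thetas q m = {\<theta>. (\<forall>i<m. \<theta> i \<in> Theta q) \<and> (\<forall>i\<ge>m. \<theta> i = 0)}"

(* value of qubit j (0 <= j < n) of the computational basis state |k,l>,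
   k labelling the first n/2 qubits and l the last n/2 qubits *)
definition qubit :: "nat \<Rightarrow> nat \<Rightarrow> nat \<Rightarrow> nat \<Rightarrow> bool" where
  "qubit n k l j = (if j < n div 2 then odd (k div 2 ^ j) else odd (l div 2 ^ (j - n div 2)))"

(* diagonal entry <k,l| D |k,l> of D = exp(i sum_i theta_i tensor_j Z^{A_ij}) *)
definition Dentry :: "nat \<Rightarrow> nat \<Rightarrow> (nat \<Rightarrow> nat \<Rightarrow> bool) \<Rightarrow> (nat \<Rightarrow> real) \<Rightarrow> nat \<Rightarrow> nat \<Rightarrow> complex" where
  "Dentry m n A \<theta> k l =
     exp (\<i> * complex_of_real (\<Sum>i<m. \<theta> i * (\<Prod>j<n. (if A i j \<and> qubit n k l j then -1 else 1))))"

definition Lambda :: "nat \<Rightarrow> nat \<Rightarrow> (nat \<Rightarrow> nat \<Rightarrow> bool) \<Rightarrow> (nat \<Rightarrow> real) \<Rightarrow> complex mat" where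
  "Lambda m n A \<theta> = mat (2 ^ (n div 2)) (2 ^ (n div 2)) (\<lambda>(k, l). Dentry m n A \<theta> k l)"

definition ctrans :: "complex mat \<Rightarrow> complex mat" where
  "ctrans M = mat (dim_col M) (dim_row M) (\<lambda>(i, j). cnj (M $$ (j, i)))"

definition mtrace :: "complex mat \<Rightarrow> complex" where
  "mtrace M = (\<Sum>i<dim_row M. M $$ (i, i))"

(* reduced density matrix on the first n/2 qubits: rho_A = 2^-n Lambda Lambda^dagger *)
definition rhoA :: "nat \<Rightarrow> nat \<Rightarrow> (nat \<Rightarrow> nat \<Rightarrow> bool) \<Rightarrow> (nat \<Rightarrow> real) \<Rightarrow> complex mat" where
  "rhoA m n A \<theta> = (1 / 2 ^ n :: complex) \<cdot>\<^sub>m (Lambda m n A \<theta> * ctrans (Lambda m n A \<theta>))"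

definition xlogx :: "real \<Rightarrow> real" where
  "xlogx x = (if x \<le> 0 then 0 else x * ln x)"

(* von Neumann entropy -Tr(rho log rho) = - sum over eigenvalues (with algebraic multiplicity)
   of lambda log lambda; eigenvalues of the Hermitian rho are real, Re is taken *)
definition vn_entropy :: "complex mat \<Rightarrow> real" where
  "vn_entropy \<rho> = - (\<Sum>e\<in>{e. eigenvalue \<rho> e}. real (order e (char_poly \<rho>)) * xlogx (Re e))"

end

theory Submission
  imports
    Defs
    "HOL-Library.FuncSet"
    "Jordan_Normal_Form.Jordan_Normal_Form_Existence"
    "Jordan_Normal_Form.Jordan_Normal_Form_Uniqueness"
    "Jordan_Normal_Form.Schur_Decomposition"
begin

(* The entry of D at |k,l> is cis (\<Sum>i \<theta>_i s_i(k) t_i(l)), where s_i(k), t_i(l) = \<plusminus>1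
   are the eigenvalues of the Z-string of row A_i on the two halves of the qubits. Hence
   Tr(\<rho>_A\<^sup>2) = 4^-n \<Sum>_{k,k',l,l'} \<Prod>_i cis (\<theta>_i X_i) with the integers
   X_i = (s_i(k) - s_i(k')) (t_i(l) - t_i(l')), |X_i| \<le> 4 < q. Averaging \<theta>_i over \<Theta>_q kills every
   factor with X_i \<noteq> 0, and if k \<noteq> k' and l \<noteq> l' a uniformly random row has X_i = 0 with
   probability at most 3/4: flipping a bit of the row where k and k' differ toggles s_i(k) = s_i(k')
   and leaves the t_i alone, and symmetrically for l, l'. The terms with k = k' or l = l' contribute
   at most 2 * 2^(-n/2).
   Column k of \<rho>_A depends on k only through the sign vector (s_i(k))_i, so \<rho>_A has at most 2^m
   distinct columns. Hence its rank is at most 2^m, and since it is positive semidefinite of trace 1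
   with a kernel of codimension at most 2^m, its entropy is at most m log 2. *)

section \<open>Phases of the diagonal unitary\<close>

(* left_sign h r k is the eigenvalue of Z^{r_0} \<otimes> ... \<otimes> Z^{r_{h-1}} on the basis state |k> of the
   first h qubits; right_sign is the same for the last h qubits. *)
definition left_sign :: "nat \<Rightarrow> (nat \<Rightarrow> bool) \<Rightarrow> nat \<Rightarrow> int" where
  "left_sign h r k = (\<Prod>j<h. if r j \<and> odd (k div 2 ^ j) then -1 else 1)"

definition right_sign :: "nat \<Rightarrow> (nat \<Rightarrow> bool) \<Rightarrow> nat \<Rightarrow> int" where
  "right_sign h r l = left_sign h (\<lambda>j. r (j + h)) l"

definition phase :: "nat \<Rightarrow> nat \<Rightarrow> (nat \<Rightarrow> nat \<Rightarrow> bool) \<Rightarrow> (nat \<Rightarrow> real) \<Rightarrow> nat \<Rightarrow> nat \<Rightarrow> real" where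
  "phase m h A \<theta> k l = (\<Sum>i<m. \<theta> i * of_int (left_sign h (A i) k * right_sign h (A i) l))"

lemma left_sign_cases: "left_sign h r k = 1 \<or> left_sign h r k = -1"
  unfolding left_sign_def by (induct h) auto

lemma right_sign_cases: "right_sign h r l = 1 \<or> right_sign h r l = -1"
  unfolding right_sign_def by (rule left_sign_cases)

lemma prod_lessThan_add:
  fixes h h' :: nat
  shows "(\<Prod>j<h + h'. f j) = (\<Prod>j<h. f j) * (\<Prod>j<h'. f (j + h))"
  by (induct h') (auto simp: ac_simps)

lemma Dentry_eq_cis_phase:
  assumes n: "n = 2 * h"
  shows "Dentry m n A \<theta> k l = cis (phase m h A \<theta> k l)"
proof -
  have "(\<Prod>j<n. if A i j \<and> qubit n k l j then -1 else 1 :: real)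
      = of_int (left_sign h (A i) k * right_sign h (A i) l)" for i
  proof -
    let ?f = "\<lambda>j. if A i j \<and> qubit n k l j then -1 else 1 :: real"
    have "(\<Prod>j<h. ?f j) = of_int (left_sign h (A i) k)"
      unfolding left_sign_def of_int_prod using n by (intro prod.cong) (auto simp: qubit_def)
    moreover have "(\<Prod>j<h. ?f (j + h)) = of_int (right_sign h (A i) l)"
      unfolding right_sign_def left_sign_def of_int_prod using n
      by (intro prod.cong) (auto simp: qubit_def)
    ultimately show ?thesis
      using prod_lessThan_add[of ?f h h] n by (simp add: mult_2)
  qed
  then show ?thesis
    unfolding Dentry_def cis_conv_exp phase_def by simp
qed

(* Like Pi\<^sub>E {..<m} (\<lambda>_. S), but with the default value c instead of undefined; Amats and Thetas
   are of this form. *)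
definition pad_funcset :: "nat \<Rightarrow> 'a set \<Rightarrow> 'a \<Rightarrow> (nat \<Rightarrow> 'a) set" where
  "pad_funcset m S c = {f. (\<forall>i<m. f i \<in> S) \<and> (\<forall>i\<ge>m. f i = c)}"

lemma bij_betw_pad_funcset:
  "bij_betw (\<lambda>g i. if i < m then g i else c) (Pi\<^sub>E {..<m} (\<lambda>_. S)) (pad_funcset m S c)"
  unfolding pad_funcset_def
  by (rule bij_betwI[where g = "\<lambda>f. restrict f {..<m}"])
    (auto simp: PiE_def extensional_def fun_eq_iff not_less)

lemma card_pad_funcset: "card (pad_funcset m S c) = card S ^ m"
proof -
  have "card (pad_funcset m S c) = card (Pi\<^sub>E {..<m} (\<lambda>_. S))"
    by (rule bij_betw_same_card[OF bij_betw_pad_funcset, symmetric])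
  then show ?thesis by (simp add: card_PiE)
qed

lemma finite_pad_funcset:
  assumes "finite S"
  shows "finite (pad_funcset m S c)"
proof -
  have "finite (Pi\<^sub>E {..<m} (\<lambda>_. S))" using assms by (simp add: finite_PiE)
  then show ?thesis by (simp add: bij_betw_finite[OF bij_betw_pad_funcset, symmetric])
qed

lemma sum_pad_funcset_prod:
  fixes G :: "nat \<Rightarrow> 'a \<Rightarrow> 'b::comm_semiring_1"
  assumes "finite S"
  shows "(\<Sum>f\<in>pad_funcset m S c. \<Prod>i<m. G i (f i)) = (\<Prod>i<m. \<Sum>x\<in>S. G i x)"
proof -
  have "(\<Sum>f\<in>pad_funcset m S c. \<Prod>i<m. G i (f i)) = (\<Sum>g\<in>Pi\<^sub>E {..<m} (\<lambda>_. S). \<Prod>i<m. G i (g i))"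
    by (subst sum.reindex_bij_betw[OF bij_betw_pad_funcset, symmetric])
      (auto intro!: sum.cong prod.cong)
  also have "\<dots> = (\<Prod>i<m. \<Sum>x\<in>S. G i x)"
    by (rule prod_sum_PiE[symmetric]) (use assms in auto)
  finally show ?thesis .
qed

definition Rows :: "nat \<Rightarrow> (nat \<Rightarrow> bool) set" where
  "Rows n = pad_funcset n UNIV False"

lemma card_Rows: "card (Rows n) = 2 ^ n"
  unfolding Rows_def by (simp add: card_pad_funcset card_UNIV_bool)

lemma finite_Rows: "finite (Rows n)"
  unfolding Rows_def by (simp add: finite_pad_funcset)

lemma Amats_eq_pad_funcset: "Amats m n = pad_funcset m (Rows n) (\<lambda>_. False)"
  unfolding Amats_def Rows_def pad_funcset_def by (auto simp: fun_eq_iff) (metis leI)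

lemma Thetas_eq_pad_funcset: "Thetas q m = pad_funcset m (Theta q) 0"
  unfolding Thetas_def pad_funcset_def by auto

lemma Theta_eq_image: "Theta q = (\<lambda>k. 2 * pi * real k / real q) ` {..<q}"
  unfolding Theta_def by auto

lemma inj_on_Theta: "q > 0 \<Longrightarrow> inj_on (\<lambda>k. 2 * pi * real k / real q) {..<q}"
  by (auto simp: inj_on_def)

lemma card_Theta: "q > 0 \<Longrightarrow> card (Theta q) = q"
  unfolding Theta_eq_image by (simp add: card_image inj_on_Theta)

lemma finite_Theta: "finite (Theta q)"
  unfolding Theta_eq_image by simp

lemma card_Amats: "card (Amats m n) = (2 ^ n) ^ m"
  unfolding Amats_eq_pad_funcset by (simp add: card_pad_funcset card_Rows)

lemma card_Thetas: "q > 0 \<Longrightarrow> card (Thetas q m) = q ^ m"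
  unfolding Thetas_eq_pad_funcset by (simp add: card_pad_funcset card_Theta)

section \<open>Averaging over the angles\<close>

lemma cis_sum: "cis (\<Sum>i\<in>I. f i) = (\<Prod>i\<in>I. cis (f i))"
  by (induct I rule: infinite_finite_induct) (auto simp flip: cis_mult)

lemma cis_2pi_of_int: "cis (2 * pi * of_int z) = 1"
  by (simp add: complex_eq_iff cos_int_2pin sin_int_2pin)

lemma sum_Theta_cis:
  assumes z: "\<bar>z\<bar> < int q"
  shows "(\<Sum>t\<in>Theta q. cis (t * of_int z)) = (if z = 0 then of_nat q else 0)"
proof -
  have q: "q > 0" using z by linarith
  define w where "w = cis (2 * pi * of_int z / real q)"
  have sum_eq: "(\<Sum>t\<in>Theta q. cis (t * of_int z)) = (\<Sum>k<q. w ^ k)"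
    unfolding Theta_eq_image w_def DeMoivre
    by (subst sum.reindex[OF inj_on_Theta[OF q]]) (auto intro!: sum.cong simp: field_simps)
  show ?thesis
  proof (cases "z = 0")
    case True
    then show ?thesis unfolding sum_eq w_def by simp
  next
    case False
    have "w \<noteq> 1"
    proof
      assume "w = 1"
      then have "cos (2 * pi * of_int z / real q) = 1"
        unfolding w_def by (metis Re_complex_of_real cis.sel(1) one_complex.sel(1))
      then obtain j :: int where "2 * pi * of_int z / real q = of_int j * 2 * pi"
        by (auto simp: cos_one_2pi_int)
      then have "real_of_int z = of_int j * real q" using q by (simp add: field_simps)
      then have zj: "z = j * int q" by (metis of_int_eq_iff of_int_mult of_int_of_nat_eq)
      with False have "j \<noteq> 0" by auto
      then have "\<bar>z\<bar> \<ge> int q"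
        unfolding zj abs_mult by (simp add: mult_le_cancel_right1 del: of_nat_le_iff) linarith
      with z show False by simp
    qed
    moreover have "w ^ q = 1"
      unfolding w_def DeMoivre using q
      by (simp add: cis_2pi_of_int[of z, symmetric] field_simps)
    ultimately show ?thesis
      unfolding sum_eq using False by (simp add: geometric_sum)
  qed
qed

section \<open>Averaging over the rows\<close>

lemma four_card_disj_le_three_card:
  assumes R: "finite R"
    and f: "inj_on f R" "\<And>r. r \<in> R \<Longrightarrow> f r \<in> R \<and> (a (f r) \<longleftrightarrow> \<not> a r) \<and> (b (f r) \<longleftrightarrow> b r)"
    and g: "inj_on g R" "\<And>r. r \<in> R \<Longrightarrow> g r \<in> R \<and> (a (g r) \<longleftrightarrow> a r) \<and> (b (g r) \<longleftrightarrow> \<not> b r)"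
  shows "4 * card {r\<in>R. a r \<or> b r} \<le> 3 * card R"
proof -
  define C where "C x y = {r\<in>R. a r = x \<and> b r = y}" for x y
  have fin: "finite (C x y)" for x y
    unfolding C_def using R by simp
  have "card (C True y) \<le> card (C False y)" for y
    by (rule card_inj_on_le[of f _ _, OF inj_on_subset[OF f(1)] _ fin]) (use f(2) in \<open>auto simp: C_def\<close>)
  moreover have "card (C x True) \<le> card (C x False)" for x
    by (rule card_inj_on_le[of g _ _, OF inj_on_subset[OF g(1)] _ fin]) (use g(2) in \<open>auto simp: C_def\<close>)
  ultimately have le: "card (C x y) \<le> card (C False False)" for x y
    by (cases x; cases y) (auto intro: order_trans)
  have "card {r\<in>R. a r \<or> b r} \<le> card (C True True \<union> C True False \<union> C False True)"
    by (intro card_mono finite_UnI fin) (auto simp: C_def)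
  also have "\<dots> \<le> card (C True True) + card (C True False) + card (C False True)"
    by (meson add_le_mono card_Un_le order_trans order_refl)
  finally have disj: "card {r\<in>R. a r \<or> b r} \<le> 3 * card (C False False)"
    using le[of True True] le[of True False] le[of False True] by linarith
  have "card R = card ({r\<in>R. a r \<or> b r} \<union> C False False)"
    by (rule arg_cong[where f = card]) (auto simp: C_def)
  also have "\<dots> = card {r\<in>R. a r \<or> b r} + card (C False False)"
    by (rule card_Un_disjoint) (auto simp: C_def R fin)
  finally show ?thesis using disj by linarith
qed

definition flip_bit :: "nat \<Rightarrow> (nat \<Rightarrow> bool) \<Rightarrow> nat \<Rightarrow> bool" where
  "flip_bit j r = r(j := \<not> r j)"

lemma flip_bit_flip_bit [simp]: "flip_bit j (flip_bit j r) = r"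
  unfolding flip_bit_def by auto

lemma inj_flip_bit: "inj (flip_bit j)"
  by (metis flip_bit_flip_bit injI)

lemma flip_bit_Rows: "j < n \<Longrightarrow> r \<in> Rows n \<Longrightarrow> flip_bit j r \<in> Rows n"
  unfolding Rows_def pad_funcset_def flip_bit_def by auto

lemma left_sign_flip_bit:
  assumes "j < h"
  shows "left_sign h (flip_bit j r) k = (if odd (k div 2 ^ j) then -1 else 1) * left_sign h r k"
proof -
  let ?f = "\<lambda>r i. if r i \<and> odd (k div 2 ^ i) then -1 else 1 :: int"
  have j: "j \<in> {..<h}" using assms by simp
  have "left_sign h (flip_bit j r) k = ?f (flip_bit j r) j * (\<Prod>i\<in>{..<h} - {j}. ?f (flip_bit j r) i)"
    unfolding left_sign_def by (rule prod.remove[OF finite_lessThan j])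
  also have "(\<Prod>i\<in>{..<h} - {j}. ?f (flip_bit j r) i) = (\<Prod>i\<in>{..<h} - {j}. ?f r i)"
    by (intro prod.cong) (auto simp: flip_bit_def)
  also have "?f (flip_bit j r) j * \<dots> = (if odd (k div 2 ^ j) then -1 else 1) * (?f r j * \<dots>)"
    by (auto simp: flip_bit_def)
  also have "?f r j * (\<Prod>i\<in>{..<h} - {j}. ?f r i) = left_sign h r k"
    unfolding left_sign_def by (rule prod.remove[OF finite_lessThan j, symmetric])
  finally show ?thesis .
qed

lemma left_sign_flip_bit_ge: "h \<le> j \<Longrightarrow> left_sign h (flip_bit j r) k = left_sign h r k"
  unfolding left_sign_def flip_bit_def by (intro prod.cong) auto

lemma right_sign_flip_bit:
  assumes "j < h"
  shows "right_sign h (flip_bit (j + h) r) l = (if odd (l div 2 ^ j) then -1 else 1) * right_sign h r l"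
proof -
  have "(\<lambda>i. flip_bit (j + h) r (i + h)) = flip_bit j (\<lambda>i. r (i + h))"
    by (auto simp: flip_bit_def fun_eq_iff)
  then show ?thesis
    unfolding right_sign_def using left_sign_flip_bit[OF assms] by simp
qed

lemma right_sign_flip_bit_less:
  assumes "j < h"
  shows "right_sign h (flip_bit j r) l = right_sign h r l"
proof -
  have "(\<lambda>i. flip_bit j r (i + h)) = (\<lambda>i. r (i + h))"
    using assms by (auto simp: flip_bit_def fun_eq_iff)
  then show ?thesis unfolding right_sign_def by simp
qed

lemma exists_bit_differs:
  fixes k k' :: nat
  assumes "k < 2 ^ h" "k' < 2 ^ h" "k \<noteq> k'"
  shows "\<exists>j<h. odd (k div 2 ^ j) \<noteq> odd (k' div 2 ^ j)"
proof -
  from assms(3) obtain j where j: "bit k j \<noteq> bit k' j"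
    using bit_eq_iff by blast
  have "j < h"
  proof (rule ccontr)
    assume "\<not> j < h"
    then have "(2::nat) ^ h \<le> 2 ^ j" by simp
    with assms(1,2) have "k < 2 ^ j" "k' < 2 ^ j" by linarith+
    then have "k div 2 ^ j = 0" "k' div 2 ^ j = 0" by simp_all
    then show False using j by (simp add: bit_iff_odd)
  qed
  with j show ?thesis by (auto simp: bit_iff_odd)
qed

lemma card_Rows_sign_coincidence:
  assumes k: "k < 2 ^ h" "k' < 2 ^ h" "k \<noteq> k'" and l: "l < 2 ^ h" "l' < 2 ^ h" "l \<noteq> l'"
  shows "4 * card {r\<in>Rows (2 * h). left_sign h r k = left_sign h r k' \<or> right_sign h r l = right_sign h r l'}
    \<le> 3 * 2 ^ (2 * h)"
proof -
  obtain j0 where j0: "j0 < h" "odd (k div 2 ^ j0) \<noteq> odd (k' div 2 ^ j0)"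
    using exists_bit_differs[OF k] by blast
  obtain j1 where j1: "j1 < h" "odd (l div 2 ^ j1) \<noteq> odd (l' div 2 ^ j1)"
    using exists_bit_differs[OF l] by blast
  have "4 * card {r\<in>Rows (2 * h). left_sign h r k = left_sign h r k' \<or> right_sign h r l = right_sign h r l'}
    \<le> 3 * card (Rows (2 * h))"
  proof (rule four_card_disj_le_three_card[OF finite_Rows,
        where f = "flip_bit j0" and g = "flip_bit (j1 + h)"])
    show "inj_on (flip_bit j0) (Rows (2 * h))" "inj_on (flip_bit (j1 + h)) (Rows (2 * h))"
      using inj_flip_bit by (auto intro: inj_on_subset)
  next
    fix r assume "r \<in> Rows (2 * h)"
    then show "flip_bit j0 r \<in> Rows (2 * h)
      \<and> (left_sign h (flip_bit j0 r) k = left_sign h (flip_bit j0 r) k' \<longleftrightarrow> \<not> left_sign h r k = left_sign h r k')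
      \<and> (right_sign h (flip_bit j0 r) l = right_sign h (flip_bit j0 r) l' \<longleftrightarrow> right_sign h r l = right_sign h r l')"
      using j0 left_sign_cases[of h r k] left_sign_cases[of h r k']
      by (auto simp: flip_bit_Rows left_sign_flip_bit right_sign_flip_bit_less)
  next
    fix r assume "r \<in> Rows (2 * h)"
    then show "flip_bit (j1 + h) r \<in> Rows (2 * h)
      \<and> (left_sign h (flip_bit (j1 + h) r) k = left_sign h (flip_bit (j1 + h) r) k' \<longleftrightarrow> left_sign h r k = left_sign h r k')
      \<and> (right_sign h (flip_bit (j1 + h) r) l = right_sign h (flip_bit (j1 + h) r) l' \<longleftrightarrow> \<not> right_sign h r l = right_sign h r l')"
      using j1 right_sign_cases[of h r l] right_sign_cases[of h r l']
      by (auto simp: flip_bit_Rows right_sign_flip_bit left_sign_flip_bit_ge)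
  qed
  then show ?thesis by (simp add: card_Rows)
qed

section \<open>The average purity\<close>

definition cross_sign :: "nat \<Rightarrow> (nat \<Rightarrow> bool) \<Rightarrow> nat \<Rightarrow> nat \<Rightarrow> nat \<Rightarrow> nat \<Rightarrow> int" where
  "cross_sign h r k k' l l' = (left_sign h r k - left_sign h r k') * (right_sign h r l - right_sign h r l')"

lemma abs_cross_sign_le: "\<bar>cross_sign h r k k' l l'\<bar> \<le> 4"
proof -
  have "\<bar>left_sign h r k - left_sign h r k'\<bar> \<le> 2" "\<bar>right_sign h r l - right_sign h r l'\<bar> \<le> 2"
    using left_sign_cases[of h r k] left_sign_cases[of h r k']
      right_sign_cases[of h r l] right_sign_cases[of h r l'] by auto
  from mult_mono[OF this] show ?thesis
    unfolding cross_sign_def abs_mult by simp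
qed

lemma cross_sign_eq_0_iff:
  "cross_sign h r k k' l l' = 0 \<longleftrightarrow> left_sign h r k = left_sign h r k' \<or> right_sign h r l = right_sign h r l'"
  unfolding cross_sign_def by simp

lemma Dentry_quadruple_eq_prod_cis:
  assumes n: "n = 2 * h"
  shows "Dentry m n A \<theta> k l * cnj (Dentry m n A \<theta> k' l) * (Dentry m n A \<theta> k' l' * cnj (Dentry m n A \<theta> k l'))
    = (\<Prod>i<m. cis (\<theta> i * of_int (cross_sign h (A i) k k' l l')))"
proof -
  have "phase m h A \<theta> k l - phase m h A \<theta> k' l + (phase m h A \<theta> k' l' - phase m h A \<theta> k l')
      = (\<Sum>i<m. \<theta> i * of_int (cross_sign h (A i) k k' l l'))"
    unfolding phase_def cross_sign_def
    by (simp add: sum_subtractf[symmetric] sum.distrib[symmetric] algebra_simps)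
  then show ?thesis
    unfolding Dentry_eq_cis_phase[OF n] by (simp add: cis_cnj cis_mult cis_sum)
qed

lemma rhoA_carrier: "rhoA m n A \<theta> \<in> carrier_mat (2 ^ (n div 2)) (2 ^ (n div 2))"
  unfolding rhoA_def ctrans_def Lambda_def by (intro carrier_matI) simp_all

lemma rhoA_entry:
  assumes "k < 2 ^ (n div 2)" "k' < 2 ^ (n div 2)"
  shows "rhoA m n A \<theta> $$ (k, k')
    = (1 / 2 ^ n) * (\<Sum>l<2 ^ (n div 2). Dentry m n A \<theta> k l * cnj (Dentry m n A \<theta> k' l))"
  using assms unfolding rhoA_def ctrans_def Lambda_def
  by (simp add: scalar_prod_def atLeast0LessThan)

lemma mtrace_rhoA_squared:
  assumes n: "n = 2 * h"
  shows "mtrace (rhoA m n A \<theta> * rhoA m n A \<theta>) = (1 / 2 ^ n)\<^sup>2 *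
    (\<Sum>k<2^h. \<Sum>k'<2^h. \<Sum>l<2^h. \<Sum>l'<2^h. \<Prod>i<m. cis (\<theta> i * of_int (cross_sign h (A i) k k' l l')))"
proof -
  let ?\<rho> = "rhoA m n A \<theta>" and ?D = "Dentry m n A \<theta>"
  have hd: "n div 2 = h" using n by simp
  have C: "?\<rho> \<in> carrier_mat (2 ^ h) (2 ^ h)"
    using rhoA_carrier[of m n A \<theta>] by (simp add: hd)
  have "mtrace (?\<rho> * ?\<rho>) = (\<Sum>k<2^h. (?\<rho> * ?\<rho>) $$ (k, k))"
    unfolding mtrace_def using C by simp
  also have "\<dots> = (\<Sum>k<2^h. \<Sum>k'<2^h. ?\<rho> $$ (k, k') * ?\<rho> $$ (k', k))"
    using C by (intro sum.cong refl) (simp add: scalar_prod_def atLeast0LessThan)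
  also have "\<dots> = (\<Sum>k<2^h. \<Sum>k'<2^h. (1 / 2 ^ n)\<^sup>2 *
      (\<Sum>l<2^h. \<Sum>l'<2^h. ?D k l * cnj (?D k' l) * (?D k' l' * cnj (?D k l'))))"
    by (intro sum.cong refl) (simp add: rhoA_entry hd sum_product power2_eq_square)
  finally show ?thesis
    by (simp add: sum_distrib_left Dentry_quadruple_eq_prod_cis[OF n])
qed

lemma sum_Amats_Thetas_prod_cis:
  assumes q: "q > 4"
  shows "(\<Sum>A\<in>Amats m n. \<Sum>\<theta>\<in>Thetas q m. \<Prod>i<m. cis (\<theta> i * of_int (cross_sign h (A i) k k' l l')))
    = of_nat ((q * card {r\<in>Rows n. cross_sign h r k k' l l' = 0}) ^ m)"
proof -
  let ?X = "\<lambda>r. cross_sign h r k k' l l'"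
  have small: "\<bar>?X r\<bar> < int q" for r
    using abs_cross_sign_le[of h r k k' l l'] q by linarith
  have "(\<Sum>\<theta>\<in>Thetas q m. \<Prod>i<m. cis (\<theta> i * of_int (?X (A i))))
      = (\<Prod>i<m. if ?X (A i) = 0 then of_nat q else 0)" for A
    unfolding Thetas_eq_pad_funcset
    by (simp add: sum_pad_funcset_prod[OF finite_Theta, where G = "\<lambda>i t. cis (t * of_int (?X (A i)))"]
        sum_Theta_cis[OF small])
  then have "(\<Sum>A\<in>Amats m n. \<Sum>\<theta>\<in>Thetas q m. \<Prod>i<m. cis (\<theta> i * of_int (?X (A i))))
      = (\<Prod>i<m. \<Sum>r\<in>Rows n. if ?X r = 0 then of_nat q else 0)"
    unfolding Amats_eq_pad_funcset
    by (simp add: sum_pad_funcset_prod[OF finite_Rows, where G = "\<lambda>i r. if ?X r = 0 then of_nat q else 0"])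
  also have "(\<Sum>r\<in>Rows n. if ?X r = 0 then of_nat q else 0) = (of_nat (q * card {r\<in>Rows n. ?X r = 0}) :: complex)"
    by (simp add: sum.If_cases finite_Rows Int_def conj_commute)
  finally show ?thesis by simp
qed

lemma sum_swap_inside4:
  "(\<Sum>a\<in>A. \<Sum>b\<in>B. \<Sum>k\<in>K. \<Sum>k'\<in>K'. \<Sum>l\<in>L. \<Sum>l'\<in>L'. f a b k k' l l')
    = (\<Sum>k\<in>K. \<Sum>k'\<in>K'. \<Sum>l\<in>L. \<Sum>l'\<in>L'. \<Sum>a\<in>A. \<Sum>b\<in>B. f a b k k' l l')"
  by (simp only: sum.swap[where A = A and B = K] sum.swap[where A = A and B = K']
      sum.swap[where A = A and B = L] sum.swap[where A = A and B = L']
      sum.swap[where A = B and B = K] sum.swap[where A = B and B = K']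
      sum.swap[where A = B and B = L] sum.swap[where A = B and B = L'])

lemma sum_purity_eq:
  assumes n: "n = 2 * h" and q: "q > 4"
  shows "(\<Sum>A\<in>Amats m n. \<Sum>\<theta>\<in>Thetas q m. Re (mtrace (rhoA m n A \<theta> * rhoA m n A \<theta>)))
    = (1 / 2 ^ n)\<^sup>2 *
      (\<Sum>k<2^h. \<Sum>k'<2^h. \<Sum>l<2^h. \<Sum>l'<2^h. real ((q * card {r\<in>Rows n. cross_sign h r k k' l l' = 0}) ^ m))"
proof -
  have "(\<Sum>A\<in>Amats m n. \<Sum>\<theta>\<in>Thetas q m. mtrace (rhoA m n A \<theta> * rhoA m n A \<theta>))
      = (1 / 2 ^ n)\<^sup>2 * (\<Sum>k<2^h. \<Sum>k'<2^h. \<Sum>l<2^h. \<Sum>l'<2^h.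
          \<Sum>A\<in>Amats m n. \<Sum>\<theta>\<in>Thetas q m. \<Prod>i<m. cis (\<theta> i * of_int (cross_sign h (A i) k k' l l')))"
    unfolding mtrace_rhoA_squared[OF n] sum_distrib_left[symmetric] by (subst sum_swap_inside4) (rule refl)
  also have "\<dots> = of_real ((1 / 2 ^ n)\<^sup>2 *
      (\<Sum>k<2^h. \<Sum>k'<2^h. \<Sum>l<2^h. \<Sum>l'<2^h. real ((q * card {r\<in>Rows n. cross_sign h r k k' l l' = 0}) ^ m)))"
    by (simp add: sum_Amats_Thetas_prod_cis[OF q])
  finally show ?thesis
    by (simp only: Re_sum[symmetric] Re_complex_of_real)
qed

lemma sum4_le_off_diagonal_bound:
  fixes x :: "nat \<Rightarrow> nat \<Rightarrow> nat \<Rightarrow> nat \<Rightarrow> real"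
  assumes x: "\<And>k k' l l'. k < d \<Longrightarrow> k' < d \<Longrightarrow> l < d \<Longrightarrow> l' < d \<Longrightarrow>
      x k k' l l' \<le> (if k = k' \<or> l = l' then 1 else c)"
    and c: "c \<ge> 0"
  shows "(\<Sum>k<d. \<Sum>k'<d. \<Sum>l<d. \<Sum>l'<d. x k k' l l') \<le> 2 * real d ^ 3 + real d ^ 4 * c"
proof -
  have "(\<Sum>k<d. \<Sum>k'<d. \<Sum>l<d. \<Sum>l'<d. x k k' l l')
      \<le> (\<Sum>k<d. \<Sum>k'<d. \<Sum>l<d. \<Sum>l'<d. (if k = k' then 1 else 0) + (if l = l' then 1 else 0) + c)"
    by (intro sum_mono order_trans[OF x]) (use c in auto)
  also have "\<dots> = (\<Sum>k<d. \<Sum>k'<d. \<Sum>l<d. \<Sum>l'<d. if k = k' then 1 else 0)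
      + (\<Sum>k<d. \<Sum>k'<d. \<Sum>l<d. \<Sum>l'<d. if l = l' then 1 else 0) + (\<Sum>k<d. \<Sum>k'<d. \<Sum>l<d. \<Sum>l'<d. c)"
    by (simp only: sum.distrib)
  also have "(\<Sum>k<d. \<Sum>k'<d. \<Sum>l<d. \<Sum>l'<d. if k = k' then 1 else 0)
      = (\<Sum>k<d. \<Sum>k'<d. if k = k' then real d * real d else (0::real))"
    by (intro sum.cong refl) simp
  also have "\<dots> = real d ^ 3"
    by (simp add: power3_eq_cube)
  also have "(\<Sum>k<d. \<Sum>k'<d. \<Sum>l<d. \<Sum>l'<d. if l = l' then 1 else 0) = real d ^ 3"
    by (simp add: power3_eq_cube)
  also have "(\<Sum>k<d. \<Sum>k'<d. \<Sum>l<d. \<Sum>l'<d. c) = real d ^ 4 * c"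
    by (simp add: power4_eq_xxxx)
  finally show ?thesis by simp
qed

lemma coincidence_fraction_power_le:
  assumes "k < 2 ^ h" "k' < 2 ^ h" "l < 2 ^ h" "l' < 2 ^ h"
  shows "(real (card {r\<in>Rows (2 * h). cross_sign h r k k' l l' = 0}) / 2 ^ (2 * h)) ^ m
    \<le> (if k = k' \<or> l = l' then 1 else (3 / 4) ^ m)"
proof -
  let ?N = "card {r\<in>Rows (2 * h). cross_sign h r k k' l l' = 0}"
  have "?N \<le> card (Rows (2 * h))"
    by (rule card_mono[OF finite_Rows]) auto
  then have "real ?N / 2 ^ (2 * h) \<le> 1"
    by (simp add: card_Rows divide_le_eq_1)
  moreover have "real ?N / 2 ^ (2 * h) \<le> 3 / 4" if "k \<noteq> k'" "l \<noteq> l'"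
  proof -
    have "4 * ?N \<le> 3 * 2 ^ (2 * h)"
      unfolding cross_sign_eq_0_iff by (rule card_Rows_sign_coincidence) (use assms that in auto)
    from of_nat_mono[OF this] have "4 * real ?N \<le> 3 * 2 ^ (2 * h)"
      by simp
    then show ?thesis by (simp add: field_simps)
  qed
  ultimately show ?thesis
    by (auto intro: power_le_one power_mono)
qed

lemma mean_purity_le:
  assumes "even n" and q: "q > 4"
  shows "(\<Sum>A\<in>Amats m n. \<Sum>\<theta>\<in>Thetas q m. Re (mtrace (rhoA m n A \<theta> * rhoA m n A \<theta>)))
           / (real (card (Amats m n)) * real (card (Thetas q m)))
         \<le> 2 * 2 powr (- real n / 2) + (3 / 4) ^ m"
proof -
  obtain h where n: "n = 2 * h" using assms(1) by blast
  define d :: nat where "d = 2 ^ h"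
  define N where "N k k' l l' = card {r\<in>Rows n. cross_sign h r k k' l l' = 0}" for k k' l l'
  have d2: "(2::real) ^ n = real d * real d"
    unfolding n d_def by (simp add: power_mult power2_eq_square mult.commute[of 2 h])
  have entry: "(real (N k k' l l') / 2 ^ n) ^ m \<le> (if k = k' \<or> l = l' then 1 else (3 / 4) ^ m)"
    if "k < d" "k' < d" "l < d" "l' < d" for k k' l l'
    unfolding N_def n using that unfolding d_def by (rule coincidence_fraction_power_le)
  have "(\<Sum>A\<in>Amats m n. \<Sum>\<theta>\<in>Thetas q m. Re (mtrace (rhoA m n A \<theta> * rhoA m n A \<theta>)))
           / (real (card (Amats m n)) * real (card (Thetas q m)))
      = (1 / 2 ^ n)\<^sup>2 * (\<Sum>k<d. \<Sum>k'<d. \<Sum>l<d. \<Sum>l'<d. real ((q * N k k' l l') ^ m) / ((2 ^ n) ^ m * real q ^ m))"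
    using q by (simp add: sum_purity_eq[OF n q] card_Amats card_Thetas N_def d_def sum_divide_distrib[symmetric])
  also have "\<dots> = (1 / (real d * real d))\<^sup>2 * (\<Sum>k<d. \<Sum>k'<d. \<Sum>l<d. \<Sum>l'<d. (real (N k k' l l') / 2 ^ n) ^ m)"
    using q by (simp add: d2 power_divide power_mult_distrib)
  also have "\<dots> \<le> (1 / (real d * real d))\<^sup>2 * (2 * real d ^ 3 + real d ^ 4 * (3 / 4) ^ m)"
    by (intro mult_left_mono sum4_le_off_diagonal_bound entry) auto
  also have "\<dots> = 2 * (1 / real d) + (3 / 4) ^ m"
    by (simp add: d_def field_simps power2_eq_square power3_eq_cube power4_eq_xxxx)
  also have "1 / real d = 2 powr (- real n / 2)"
    by (simp add: n d_def powr_minus powr_realpow inverse_eq_divide)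
  finally show ?thesis .
qed

section \<open>Rank and kernel of a matrix with repeated columns\<close>

lemma (in vec_space) rank_le_card_cols:
  assumes "A \<in> carrier_mat n nc"
  shows "rank A \<le> card (set (cols A))"
proof -
  obtain S where S: "maximal S (\<lambda>T. T \<subseteq> set (cols A) \<and> lin_indpt T)"
    using maximal_exists[of "(\<lambda>T. T \<subseteq> set (cols A) \<and> lin_indpt T)" "card (set (cols A))" "{}"]
    by (meson List.finite_set card_mono empty_iff empty_subsetI finite_lin_indpt2 rev_finite_subset)
  then have "card S \<le> card (set (cols A))" by (simp add: card_mono maximal_def)
  then show ?thesis using rank_card_indpt[OF assms S] by simp
qed

lemma card_image_le_if_factors:
  assumes "finite K" and factors: "\<And>x y. x \<in> K \<Longrightarrow> y \<in> K \<Longrightarrow> g x = g y \<Longrightarrow> f x = f y"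
  shows "card (f ` K) \<le> card (g ` K)"
proof (rule surj_card_le)
  show "finite (g ` K)" using assms(1) by simp
  show "f ` K \<subseteq> (\<lambda>v. f (inv_into K g v)) ` g ` K"
  proof
    fix y assume "y \<in> f ` K"
    then obtain x where x: "x \<in> K" "y = f x" by auto
    have "inv_into K g (g x) \<in> K" "g (inv_into K g (g x)) = g x"
      using x(1) by (auto intro: inv_into_into f_inv_into_f)
    then have "f (inv_into K g (g x)) = f x"
      using factors x(1) by blast
    with x show "y \<in> (\<lambda>v. f (inv_into K g v)) ` g ` K"
      by (auto intro!: image_eqI[of _ _ "g x"])
  qed
qed

lemma rank_le_card_col_labels:
  fixes M :: "'a::field mat"
  assumes M: "M \<in> carrier_mat d d"
    and g: "\<And>k1 k2. k1 < d \<Longrightarrow> k2 < d \<Longrightarrow> g k1 = g k2 \<Longrightarrow> col M k1 = col M k2"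
  shows "vec_space.rank d M \<le> card (g ` {..<d})"
proof -
  have "vec_space.rank d M \<le> card (set (cols M))" by (rule vec_space.rank_le_card_cols[OF M])
  also have "set (cols M) = col M ` {..<d}" using M by (simp add: cols_def atLeast0LessThan)
  also have "card \<dots> \<le> card (g ` {..<d})" by (rule card_image_le_if_factors) (auto intro!: g)
  finally show ?thesis .
qed

lemma (in vec_space) lin_indpt_unit_pattern:
  assumes N: "N \<subseteq> {..<n}" and w: "w ` N \<subseteq> carrier_vec n"
    and pat: "\<And>k k'. k \<in> N \<Longrightarrow> k' \<in> N \<Longrightarrow> w k $ k' = (if k' = k then 1 else 0)"
  shows "inj_on w N" and "\<not> lin_dep (w ` N)"
proof -
  show inj: "inj_on w N"
  proof (rule inj_onI)
    fix k k' assume "k \<in> N" "k' \<in> N" "w k = w k'"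
    then show "k = k'" using pat[of k k] pat[of k' k] by (auto split: if_splits)
  qed
  have finN: "finite N" using N finite_subset by blast
  show "\<not> lin_dep (w ` N)"
  proof (rule finite_lin_indpt2)
    show "finite (w ` N)" using finN by simp
    show "w ` N \<subseteq> carrier_vec n" by (rule w)
    fix a assume lc: "lincomb a (w ` N) = 0\<^sub>v n"
    show "\<forall>v\<in>w ` N. a v = 0"
    proof
      fix v assume "v \<in> w ` N"
      then obtain k where k: "k \<in> N" "v = w k" by auto
      have kn: "k < n" using k N by auto
      have "lincomb a (w ` N) $ k = (\<Sum>x\<in>w ` N. a x * x $ k)"
        by (rule lincomb_index[OF kn w])
      also have "\<dots> = (\<Sum>k'\<in>N. a (w k') * w k' $ k)"
        by (rule sum.reindex[OF inj, unfolded comp_def])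
      also have "\<dots> = (\<Sum>k'\<in>N. if k' = k then a (w k') else 0)"
        by (intro sum.cong refl) (use pat k in auto)
      also have "\<dots> = a v" using k finN by simp
      finally show "a v = 0" using lc kn by simp
    qed
  qed
qed

lemma (in vec_space) card_le_kernel_dim:
  assumes M: "M \<in> carrier_mat n n" and W: "W \<subseteq> mat_kernel M" "\<not> lin_dep W"
  shows "card W \<le> kernel_dim M"
proof -
  interpret K: kernel n n M by unfold_locales (rule M)
  have "\<not> K.lin_dep W" using W K.lindep_same by simp
  moreover obtain B where "finite B" "K.basis B" using kernel_basis_exists[OF M] by blast
  then have "K.Ker.fin_dim" unfolding K.Ker.fin_dim_def K.Ker.basis_def by blast
  ultimately have "card W \<le> K.dim" using K.Ker.li_le_dim(2) W(1) by blast
  then show ?thesis by simp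
qed

lemma mult_mat_vec_unit_vec:
  fixes M :: "'a::field mat"
  assumes "M \<in> carrier_mat nr n" "j < n"
  shows "M *\<^sub>v unit_vec n j = col M j"
  using assms by (intro eq_vecI) (auto simp: col_def carrier_matD)

(* The vectors e_k - e_{rep k} with rep k \<noteq> k lie in the kernel and are linearly independent. *)
lemma card_moved_le_kernel_dim:
  fixes M :: "'a::field mat"
  assumes M: "M \<in> carrier_mat d d"
    and rep: "\<And>k. k < d \<Longrightarrow> rep k < d \<and> rep (rep k) = rep k \<and> col M (rep k) = col M k"
  shows "card {k. k < d \<and> rep k \<noteq> k} \<le> kernel_dim M"
proof -
  interpret V: vec_space "TYPE('a)" d .
  define N where "N = {k. k < d \<and> rep k \<noteq> k}"
  define w where "w k = (unit_vec d k - unit_vec d (rep k) :: 'a vec)" for k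
  have pat: "w k $ k' = (if k' = k then 1 else 0)" if "k \<in> N" "k' \<in> N" for k k'
  proof -
    have "k' \<noteq> rep k" "k < d" "k' < d" using that rep by (auto simp: N_def)
    then show ?thesis using rep by (simp add: w_def)
  qed
  have ker: "w ` N \<subseteq> mat_kernel M"
  proof
    fix v assume "v \<in> w ` N"
    then obtain k where k: "k < d" "v = w k" by (auto simp: N_def)
    have "M *\<^sub>v v = M *\<^sub>v unit_vec d k - M *\<^sub>v unit_vec d (rep k)"
      unfolding k(2) w_def by (rule mult_minus_distrib_mat_vec[OF M]) auto
    also have "\<dots> = col M k - col M (rep k)"
      using M k(1) rep[OF k(1)] by (simp add: mult_mat_vec_unit_vec)
    finally have "M *\<^sub>v v = 0\<^sub>v d" using M rep[OF k(1)] by auto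
    then show "v \<in> mat_kernel M" using M k by (auto intro!: mat_kernelI simp: w_def)
  qed
  have "w ` N \<subseteq> carrier_vec d" by (auto simp: w_def)
  then have "inj_on w N" "\<not> V.lin_dep (w ` N)"
    using V.lin_indpt_unit_pattern[of N w] pat by (auto simp: N_def)
  then show ?thesis
    using V.card_le_kernel_dim[OF M ker] card_image unfolding N_def by fastforce
qed

lemma kernel_dim_ge_card_col_labels:
  fixes M :: "'a::field mat"
  assumes M: "M \<in> carrier_mat d d"
    and g: "\<And>k1 k2. k1 < d \<Longrightarrow> k2 < d \<Longrightarrow> g k1 = g k2 \<Longrightarrow> col M k1 = col M k2"
  shows "d - card (g ` {..<d}) \<le> kernel_dim M"
proof -
  define rep where "rep k = inv_into {..<d} g (g k)" for k
  have rep: "rep k < d" "g (rep k) = g k" if "k < d" for k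
  proof -
    have "g k \<in> g ` {..<d}" using that by simp
    from inv_into_into[OF this] f_inv_into_f[OF this] show "rep k < d" "g (rep k) = g k"
      unfolding rep_def by simp_all
  qed
  define R where "R = {k. k < d \<and> rep k = k}"
  have "card R \<le> card (g ` {..<d})"
    by (rule surj_card_le[where f = "inv_into {..<d} g"]) (force simp: R_def rep_def)+
  moreover have "card R + card {k. k < d \<and> rep k \<noteq> k} = d"
  proof -
    have "R \<union> {k. k < d \<and> rep k \<noteq> k} = {..<d}" "R \<inter> {k. k < d \<and> rep k \<noteq> k} = {}"
      by (auto simp: R_def)
    then show ?thesis using card_Un_disjoint[of R "{k. k < d \<and> rep k \<noteq> k}"] by (simp add: R_def)
  qed
  moreover have "card {k. k < d \<and> rep k \<noteq> k} \<le> kernel_dim M"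
  proof (rule card_moved_le_kernel_dim[OF M])
    fix k assume "k < d"
    with rep show "rep k < d \<and> rep (rep k) = rep k \<and> col M (rep k) = col M k"
      by (auto simp: rep_def intro: g)
  qed
  ultimately show ?thesis by linarith
qed

section \<open>Entropy of a positive semidefinite matrix\<close>

lemma mtrace_mult_comm:
  fixes X Y :: "complex mat"
  assumes X: "X \<in> carrier_mat n k" and Y: "Y \<in> carrier_mat k n"
  shows "mtrace (X * Y) = mtrace (Y * X)"
proof -
  have "mtrace (X * Y) = (\<Sum>i<n. \<Sum>j<k. X $$ (i, j) * Y $$ (j, i))"
    unfolding mtrace_def using X Y by (simp add: scalar_prod_def atLeast0LessThan)
  also have "\<dots> = (\<Sum>j<k. \<Sum>i<n. Y $$ (j, i) * X $$ (i, j))"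
    by (subst sum.swap) (simp add: mult.commute)
  also have "\<dots> = mtrace (Y * X)"
    unfolding mtrace_def using X Y by (simp add: scalar_prod_def atLeast0LessThan)
  finally show ?thesis .
qed

lemma mtrace_similar_mat_wit:
  assumes A: "A \<in> carrier_mat n n" and S: "similar_mat_wit A B P Q"
  shows "mtrace A = mtrace B"
proof -
  note W = similar_mat_witD2[OF A S]
  have "mtrace A = mtrace ((P * B) * Q)" using W(3) by simp
  also have "\<dots> = mtrace (Q * (P * B))" by (rule mtrace_mult_comm) (use W in auto)
  also have "Q * (P * B) = (Q * P) * B" by (rule assoc_mult_mat[symmetric]) (use W in auto)
  also have "\<dots> = B" using W by simp
  finally show ?thesis .
qed

lemma Re_sum_list: "Re (sum_list zs) = sum_list (map Re zs)"
  by (induct zs) auto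

lemma cnj_mult_self: "cnj z * z = complex_of_real ((cmod z)\<^sup>2)"
  by (metis complex_norm_square mult.commute)

lemma mtrace_eq_sum_list_eigenvalues:
  fixes A :: "complex mat"
  assumes A: "A \<in> carrier_mat n n" and cp: "char_poly A = (\<Prod>a\<leftarrow>as. [:-a, 1:])"
  shows "mtrace A = sum_list as"
proof -
  obtain B P Q where "schur_decomposition A as = (B, P, Q)"
    by (cases "schur_decomposition A as") auto
  from schur_decomposition[OF A cp this]
  have wit: "similar_mat_wit A B P Q" and diag: "diag_mat B = as" by auto
  have "mtrace A = mtrace B" by (rule mtrace_similar_mat_wit[OF A wit])
  also have "\<dots> = sum_list (diag_mat B)"
    unfolding mtrace_def diag_mat_def by (simp add: sum_list_sum_nth atLeast0LessThan)
  finally show ?thesis using diag by simp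
qed

lemma poly_prod_linear_eq_0_iff: "poly (\<Prod>a\<leftarrow>as. [:-a, 1:]) (e::'a::idom) = 0 \<longleftrightarrow> e \<in> set as"
  by (induct as) auto

lemma order_prod_linear: "order e (\<Prod>a\<leftarrow>as. [:-a, 1:]) = count_list as (e::'a::idom)"
proof (induct as)
  case Nil
  show ?case by (simp add: order_0I)
next
  case (Cons a as)
  have "(\<Prod>a\<leftarrow>as. [:-a, 1:]) \<noteq> 0" by (auto simp: prod_list_zero_iff)
  then have "order e ([:-a, 1:] * (\<Prod>a\<leftarrow>as. [:-a, 1:])) = order e [:-a, 1:] + order e (\<Prod>a\<leftarrow>as. [:-a, 1:])"
    by (intro order_mult no_zero_divisors) auto
  then show ?case using Cons by (simp add: order_linear')
qed

lemma kernel_dim_le_order_0: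
  fixes A :: "complex mat"
  assumes A: "A \<in> carrier_mat n n"
  shows "kernel_dim A \<le> order 0 (char_poly A)"
proof -
  obtain as where "char_poly A = (\<Prod>a\<leftarrow>as. [:-a, 1:])"
    using char_poly_factorized[OF A] by blast
  then obtain n_as where jnf: "jordan_nf A n_as"
    using jordan_nf_exists[OF A] by blast
  have "char_matrix A 0 ^\<^sub>m 1 = A"
    using A unfolding char_matrix_def by (intro eq_matI) auto
  then have "kernel_dim A = dim_gen_eigenspace A 0 1"
    unfolding dim_gen_eigenspace_def by simp
  also have "\<dots> = (\<Sum>k\<leftarrow>map fst [(k, e)\<leftarrow>n_as. e = 0]. min 1 k)"
    by (rule dim_gen_eigenspace[OF jnf])
  also have "\<dots> \<le> sum_list (map fst [(k, e)\<leftarrow>n_as. e = 0])"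
    by (induct n_as) (auto intro: add_mono)
  also have "\<dots> = order 0 (char_poly A)"
    by (simp add: jordan_nf_order[OF jnf] case_prod_unfold)
  finally show ?thesis .
qed

lemma sum_list_map_eq_sum_count_real:
  fixes f :: "'a \<Rightarrow> real"
  assumes "set xs \<subseteq> X" "finite X"
  shows "sum_list (map f xs) = (\<Sum>x\<in>X. real (count_list xs x) * f x)"
  using assms
proof (induct xs)
  case (Cons y ys)
  have "(\<Sum>x\<in>X. real (count_list (y # ys) x) * f x)
      = (\<Sum>x\<in>X. (if y = x then f x else 0) + real (count_list ys x) * f x)"
    by (intro sum.cong refl) (auto simp: algebra_simps)
  also have "\<dots> = f y + (\<Sum>x\<in>X. real (count_list ys x) * f x)"
    using Cons.prems by (simp add: sum.distrib sum.delta)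
  finally show ?case using Cons by simp
qed simp

lemma vn_entropy_eq_sum_list:
  assumes A: "A \<in> carrier_mat n n" and cp: "char_poly A = (\<Prod>a\<leftarrow>as. [:-a, 1:])"
  shows "vn_entropy A = - sum_list (map (\<lambda>a. xlogx (Re a)) as)"
proof -
  have "{e. eigenvalue A e} = set as"
    using eigenvalue_root_char_poly[OF A] cp poly_prod_linear_eq_0_iff by auto
  then show ?thesis
    unfolding vn_entropy_def cp order_prod_linear
    using sum_list_map_eq_sum_count_real[of as "set as" "\<lambda>a. xlogx (Re a)"] by simp
qed

lemma neg_xlogx_le:
  fixes p R :: real
  assumes p: "p \<ge> 0" and R: "R > 0"
  shows "- xlogx p \<le> p * ln R + (if p \<noteq> 0 then 1 / R else 0) - p"
proof (cases "p = 0")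
  case True
  then show ?thesis by (simp add: xlogx_def)
next
  case False
  with p have p: "p > 0" by simp
  have "ln (1 / (p * R)) \<le> 1 / (p * R) - 1"
    by (rule ln_le_minus_one) (use p R in simp)
  then have "p * ln (1 / (p * R)) \<le> p * (1 / (p * R) - 1)"
    using p by (simp add: mult_left_mono)
  moreover have "ln (1 / (p * R)) = - ln p - ln R"
    using p R by (simp add: ln_div ln_mult)
  moreover have "p * (1 / (p * R) - 1) = 1 / R - p"
    using p R by (simp add: field_simps)
  ultimately show ?thesis
    using p by (simp add: xlogx_def right_diff_distrib)
qed

lemma entropy_le_ln_card_support:
  fixes ps :: "real list"
  assumes nonneg: "\<forall>p\<in>set ps. p \<ge> 0" and sum1: "sum_list ps = 1"
    and support: "real (length (filter (\<lambda>p. p \<noteq> 0) ps)) \<le> R"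
  shows "- sum_list (map xlogx ps) \<le> ln R"
proof -
  have "filter (\<lambda>p. p \<noteq> 0) ps \<noteq> []"
  proof
    assume "filter (\<lambda>p. p \<noteq> 0) ps = []"
    then have "sum_list ps = 0" by (induct ps) (auto split: if_splits)
    with sum1 show False by simp
  qed
  then have R: "R > 0"
    using support by (metis length_greater_0_conv of_nat_0_less_iff order_less_le_trans)
  have "- sum_list (map xlogx ps) = sum_list (map (\<lambda>p. - xlogx p) ps)"
    by (induct ps) auto
  also have "\<dots> \<le> sum_list (map (\<lambda>p. p * ln R + (if p \<noteq> 0 then 1 / R else 0) - p) ps)"
    by (rule sum_list_mono) (use nonneg neg_xlogx_le[OF _ R] in auto)
  also have "\<dots> = sum_list ps * ln R + real (length (filter (\<lambda>p. p \<noteq> 0) ps)) / R - sum_list ps"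
    by (induct ps) (auto simp: algebra_simps add_divide_distrib)
  also have "\<dots> \<le> ln R"
    using support R sum1 by (simp add: divide_le_eq_1)
  finally show ?thesis .
qed

lemma gram_quadratic_form:
  fixes M :: "complex mat" and F :: "nat \<Rightarrow> nat \<Rightarrow> complex"
  assumes M: "M \<in> carrier_mat d d" and v: "v \<in> carrier_vec d"
    and entries: "\<And>k k'. k < d \<Longrightarrow> k' < d \<Longrightarrow> M $$ (k, k') = of_real c * (\<Sum>l<L. F k l * cnj (F k' l))"
  shows "(\<Sum>k<d. cnj (v $ k) * (M *\<^sub>v v) $ k) = of_real (c * (\<Sum>l<L. (cmod (\<Sum>k<d. cnj (F k l) * v $ k))\<^sup>2))"
proof -
  define w where "w l = (\<Sum>k<d. cnj (F k l) * v $ k)" for l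
  have "(\<Sum>k<d. cnj (v $ k) * (M *\<^sub>v v) $ k)
      = (\<Sum>k<d. \<Sum>k'<d. \<Sum>l<L. of_real c * ((cnj (v $ k) * F k l) * (cnj (F k' l) * v $ k')))"
    using M v by (intro sum.cong refl)
      (simp add: entries scalar_prod_def atLeast0LessThan sum_distrib_left sum_distrib_right algebra_simps)
  also have "\<dots> = (\<Sum>l<L. \<Sum>k<d. \<Sum>k'<d. of_real c * ((cnj (v $ k) * F k l) * (cnj (F k' l) * v $ k')))"
    by (subst sum.swap) (intro sum.cong refl sum.swap)
  also have "\<dots> = (\<Sum>l<L. of_real c * ((\<Sum>k<d. cnj (v $ k) * F k l) * (\<Sum>k'<d. cnj (F k' l) * v $ k')))"
    by (intro sum.cong refl) (subst sum_product, simp only: sum_distrib_left)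
  also have "\<dots> = (\<Sum>l<L. of_real c * (cnj (w l) * w l))"
    unfolding w_def by (simp add: cnj_sum mult.commute)
  also have "\<dots> = of_real (c * (\<Sum>l<L. (cmod (w l))\<^sup>2))"
    by (simp only: cnj_mult_self of_real_sum of_real_mult sum_distrib_left)
  finally show ?thesis unfolding w_def .
qed

lemma eigenvalue_gram_nonneg:
  fixes M :: "complex mat" and F :: "nat \<Rightarrow> nat \<Rightarrow> complex"
  assumes M: "M \<in> carrier_mat d d" and c: "c \<ge> 0"
    and entries: "\<And>k k'. k < d \<Longrightarrow> k' < d \<Longrightarrow> M $$ (k, k') = of_real c * (\<Sum>l<L. F k l * cnj (F k' l))"
    and ev: "eigenvalue M a"
  shows "Im a = 0 \<and> Re a \<ge> 0"
proof -
  obtain v where v: "v \<in> carrier_vec d" "v \<noteq> 0\<^sub>v d" "M *\<^sub>v v = a \<cdot>\<^sub>v v"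
    using ev M unfolding eigenvalue_def eigenvector_def by auto
  define P where "P = (\<Sum>k<d. (cmod (v $ k))\<^sup>2)"
  define Q where "Q = c * (\<Sum>l<L. (cmod (\<Sum>k<d. cnj (F k l) * v $ k))\<^sup>2)"
  have "a * of_real P = (\<Sum>k<d. a * (cnj (v $ k) * v $ k))"
    unfolding P_def by (simp only: cnj_mult_self of_real_sum sum_distrib_left)
  also have "\<dots> = (\<Sum>k<d. cnj (v $ k) * (M *\<^sub>v v) $ k)"
    using v by (intro sum.cong refl) (simp add: algebra_simps)
  also have "\<dots> = of_real Q"
    unfolding Q_def by (rule gram_quadratic_form[OF M v(1) entries])
  finally have aP: "a * of_real P = of_real Q" .
  obtain k0 where k0: "k0 < d" "v $ k0 \<noteq> 0"
    using v(1,2) by (metis eq_vecI carrier_vecD index_zero_vec)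
  have "P > 0" unfolding P_def
    by (rule sum_pos2[of _ k0]) (use k0 in auto)
  moreover have "Q \<ge> 0" unfolding Q_def using c by (simp add: sum_nonneg)
  moreover have "a = of_real (Q / P)"
    using aP \<open>P > 0\<close> by (simp add: field_simps)
  ultimately show ?thesis by simp
qed

(* The eigenvalues of \<rho> form a probability vector with at most R nonzero entries. *)
lemma vn_entropy_gram_le:
  fixes \<rho> :: "complex mat" and F :: "nat \<Rightarrow> nat \<Rightarrow> complex"
  assumes C: "\<rho> \<in> carrier_mat d d" and c: "c \<ge> 0"
    and entries: "\<And>k k'. k < d \<Longrightarrow> k' < d \<Longrightarrow> \<rho> $$ (k, k') = of_real c * (\<Sum>l<L. F k l * cnj (F k' l))"
    and trace: "mtrace \<rho> = 1"
    and kernel: "d - R \<le> kernel_dim \<rho>"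
  shows "vn_entropy \<rho> \<le> ln (real R)"
proof -
  obtain as where cp: "char_poly \<rho> = (\<Prod>a\<leftarrow>as. [:-a, 1:])" and len: "length as = d"
    using char_poly_factorized[OF C] by blast
  have real_nonneg: "Im a = 0 \<and> Re a \<ge> 0" if "a \<in> set as" for a
    using that eigenvalue_root_char_poly[OF C] cp poly_prod_linear_eq_0_iff
    by (intro eigenvalue_gram_nonneg[OF C c entries]) auto
  have "sum_list (map Re as) = 1"
    using mtrace_eq_sum_list_eigenvalues[OF C cp] trace by (simp flip: Re_sum_list)
  moreover have "real (length (filter (\<lambda>p. p \<noteq> 0) (map Re as))) \<le> real R"
  proof -
    have "length (filter (\<lambda>p. p \<noteq> 0) (map Re as)) = length (filter (\<lambda>a. a \<noteq> 0) as)"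
      using real_nonneg by (auto simp: complex_eq_iff intro!: arg_cong[where f = length] filter_cong)
    also have "\<dots> = d - count_list as 0"
    proof -
      have "length (filter (\<lambda>a. a \<noteq> 0) as) + count_list as 0 = length as"
        by (induct as) auto
      then show ?thesis using len by linarith
    qed
    also have "\<dots> \<le> R"
      using kernel kernel_dim_le_order_0[OF C] by (simp add: cp order_prod_linear)
    finally show ?thesis by simp
  qed
  ultimately have "- sum_list (map xlogx (map Re as)) \<le> ln (real R)"
    by (intro entropy_le_ln_card_support) (use real_nonneg in auto)
  then show ?thesis
    by (simp add: vn_entropy_eq_sum_list[OF C cp] comp_def)
qed

lemma mtrace_rhoA:
  assumes n: "n = 2 * h"
  shows "mtrace (rhoA m n A \<theta>) = 1"
proof -
  have hd: "n div 2 = h" using n by simp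
  have "mtrace (rhoA m n A \<theta>) = (\<Sum>k<(2::nat) ^ h. (1 / 2 ^ n) * (\<Sum>l<(2::nat) ^ h. (1::complex)))"
    unfolding mtrace_def using rhoA_carrier[of m n A \<theta>]
    by (intro sum.cong) (auto simp: rhoA_entry hd Dentry_eq_cis_phase[OF n] cis_cnj cis_mult)
  also have "\<dots> = (2 ^ h * 2 ^ h) / 2 ^ n" by simp
  also have "(2::complex) ^ h * 2 ^ h = 2 ^ n" by (simp add: n mult_2 power_add)
  finally show ?thesis by simp
qed

(* The sign vector (s_i(k))_{i<m}, padded with 1 beyond m so that it ranges over a set of size 2^m. *)
definition sign_pattern :: "nat \<Rightarrow> nat \<Rightarrow> (nat \<Rightarrow> nat \<Rightarrow> bool) \<Rightarrow> nat \<Rightarrow> nat \<Rightarrow> int" where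
  "sign_pattern m h A k = (\<lambda>i. if i < m then left_sign h (A i) k else 1)"

lemma card_sign_pattern_image: "card (sign_pattern m h A ` K) \<le> 2 ^ m"
proof -
  have "sign_pattern m h A ` K \<subseteq> pad_funcset m {-1, 1} 1"
    by (auto simp: sign_pattern_def pad_funcset_def) (use left_sign_cases in blast)
  then have "card (sign_pattern m h A ` K) \<le> card (pad_funcset m {-1, 1::int} 1)"
    by (intro card_mono finite_pad_funcset) auto
  then show ?thesis by (simp add: card_pad_funcset numeral_2_eq_2)
qed

lemma col_rhoA_eq_if_sign_pattern_eq:
  assumes n: "n = 2 * h" and k: "k1 < 2 ^ h" "k2 < 2 ^ h"
    and eq: "sign_pattern m h A k1 = sign_pattern m h A k2"
  shows "col (rhoA m n A \<theta>) k1 = col (rhoA m n A \<theta>) k2"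
proof -
  have hd: "n div 2 = h" using n by simp
  have "left_sign h (A i) k1 = left_sign h (A i) k2" if "i < m" for i
    using fun_cong[OF eq, of i] that by (simp add: sign_pattern_def)
  then have D: "Dentry m n A \<theta> k1 l = Dentry m n A \<theta> k2 l" for l
    by (simp add: Dentry_eq_cis_phase[OF n] phase_def)
  show ?thesis
    using rhoA_carrier[of m n A \<theta>] k by (intro eq_vecI) (simp_all add: hd rhoA_entry D)
qed

lemma rank_rhoA_le:
  assumes "even n"
  shows "vec_space.rank (2 ^ (n div 2)) (rhoA m n A \<theta>) \<le> 2 ^ m"
proof -
  obtain h where n: "n = 2 * h" using assms by blast
  have C: "rhoA m n A \<theta> \<in> carrier_mat (2 ^ h) (2 ^ h)"
    using rhoA_carrier[of m n A \<theta>] by (simp add: n)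
  have "vec_space.rank (2 ^ h) (rhoA m n A \<theta>) \<le> card (sign_pattern m h A ` {..<2 ^ h})"
    by (rule rank_le_card_col_labels[OF C col_rhoA_eq_if_sign_pattern_eq[OF n]])
  also have "\<dots> \<le> 2 ^ m" by (rule card_sign_pattern_image)
  finally show ?thesis by (simp add: n)
qed

lemma vn_entropy_rhoA_le:
  assumes "even n"
  shows "vn_entropy (rhoA m n A \<theta>) \<le> real m * ln 2"
proof -
  obtain h where n: "n = 2 * h" using assms by blast
  have C: "rhoA m n A \<theta> \<in> carrier_mat (2 ^ h) (2 ^ h)"
    using rhoA_carrier[of m n A \<theta>] by (simp add: n)
  have "2 ^ h - card (sign_pattern m h A ` {..<2 ^ h}) \<le> kernel_dim (rhoA m n A \<theta>)"
    by (rule kernel_dim_ge_card_col_labels[OF C col_rhoA_eq_if_sign_pattern_eq[OF n]])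
  then have kernel: "2 ^ h - 2 ^ m \<le> kernel_dim (rhoA m n A \<theta>)"
    using card_sign_pattern_image[of m h A "{..<2 ^ h}"] by linarith
  have "vn_entropy (rhoA m n A \<theta>) \<le> ln (real (2 ^ m))"
  proof (rule vn_entropy_gram_le[OF C _ _ mtrace_rhoA[OF n] kernel])
    show "(0::real) \<le> 1 / 2 ^ n" by simp
    fix k k' :: nat assume "k < 2 ^ h" "k' < 2 ^ h"
    then show "rhoA m n A \<theta> $$ (k, k')
      = of_real (1 / 2 ^ n) * (\<Sum>l<2 ^ h. Dentry m n A \<theta> k l * cnj (Dentry m n A \<theta> k' l))"
      using rhoA_entry[of k n k' m A \<theta>] by (simp add: n)
  qed
  also have "\<dots> = real m * ln 2" by (simp add: ln_realpow)
  finally show ?thesis .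
qed

theorem mainTheorem7:
  fixes n m q :: nat
  assumes "even n" and "m \<ge> 1" and "q > 4"
  shows "((\<Sum>A\<in>Amats m n. \<Sum>\<theta>\<in>Thetas q m. Re (mtrace (rhoA m n A \<theta> * rhoA m n A \<theta>)))
           / (real (card (Amats m n)) * real (card (Thetas q m)))
         \<le> 2 * 2 powr (- real n / 2) + (3 / 4) ^ m)
       \<and> (\<forall>A\<in>Amats m n. \<forall>\<theta>\<in>Thetas q m.
           vec_space.rank (2 ^ (n div 2)) (rhoA m n A \<theta>) \<le> 16 ^ m)
       \<and> (\<forall>A\<in>Amats m n. \<forall>\<theta>\<in>Thetas q m.
           vn_entropy (rhoA m n A \<theta>) \<le> real m * ln 16)"
proof (intro conjI ballI)
  show "(\<Sum>A\<in>Amats m n. \<Sum>\<theta>\<in>Thetas q m. Re (mtrace (rhoA m n A \<theta> * rhoA m n A \<theta>)))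
           / (real (card (Amats m n)) * real (card (Thetas q m)))
         \<le> 2 * 2 powr (- real n / 2) + (3 / 4) ^ m"
    using assms(1,3) by (rule mean_purity_le)
next
  fix A \<theta>
  have "vec_space.rank (2 ^ (n div 2)) (rhoA m n A \<theta>) \<le> 2 ^ m"
    using assms(1) by (rule rank_rhoA_le)
  also have "(2::nat) ^ m \<le> 16 ^ m" by (rule power_mono) auto
  finally show "vec_space.rank (2 ^ (n div 2)) (rhoA m n A \<theta>) \<le> 16 ^ m" .
next
  fix A \<theta>
  have "vn_entropy (rhoA m n A \<theta>) \<le> real m * ln 2"
    using assms(1) by (rule vn_entropy_rhoA_le)
  also have "\<dots> \<le> real m * ln 16" by (intro mult_left_mono) auto
  finally show "vn_entropy (rhoA m n A \<theta>) \<le> real m * ln 16" .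
qed

end
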